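(* Let $\ell,\hat\ell:\mathbb{R}^q\times\mathbb{R}^q\to(0,1)$ with $\hat\ell$ continuous and $\hat\ell(x,\xi)\ge\ell(x,\xi)$ for all $x,\xi$. Let $s\in\mathbb{R}^q$, let $c_1,\dots,c_M\in\mathbb{R}^q$, and let $(\xi_k)_{k\in\mathbb{N}}$ be $n$-periodic ($\xi_{k+n}=\xi_k$ for all $k$). For $a,b:\mathbb{R}^q\times\mathbb{R}^q\to(0,1)$ and $x\in\mathbb{R}^q$ define $$K(s,a\,\|\,x,b;\xi_{1:n})=\sum_{k=1}^n\Big[a(s,\xi_k)\ln\frac{a(s,\xi_k)}{b(x,\xi_k)}+(1-a(s,\xi_k))\ln\frac{1-a(s,\xi_k)}{1-b(x,\xi_k)}\Big],$$ and let $$B_{\mathrm{true}}=\operatorname*{argmin}_{i\in\{1,\dots,M\}}K(s,\ell\,\|\,c_i,\hat\ell;\xi_{1:n}),\qquad B_{\mathrm{env}}=\operatorname*{argmin}_{i\in\{1,\dots,M\}}K(s,\hat\ell\,\|\,c_i,\hat\ell;\xi_{1:n}).$$ Suppose that for every $i\in\{1,\dots,M\}$ there exists $j\in B_{\mathrm{true}}$ such that $\hat\ell(c_j,\xi_k)\ge\hat\ell(c_i,\xi_k)$ for all $k\in\{1,\dots,n\}$. Then $B_{\mathrm{env}}\subset B_{\mathrm{true}}$.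
   Context: $\ell$ is the true detection-probability function and $\hat\ell$ an envelope used by the estimator in its place. The paper denotes $B_{\mathrm{true}}$ by $\mathcal{B}(\ell\mid\hat\ell)$ and $B_{\mathrm{env}}$ by $\mathcal{B}(\hat\ell\mid\hat\ell)$. *)

theory Defs
  imports "HOL-Analysis.Analysis"
begin

definition KL_div ::
  "('q \<Rightarrow> 'q \<Rightarrow> real) \<Rightarrow> 'q \<Rightarrow> ('q \<Rightarrow> 'q \<Rightarrow> real) \<Rightarrow> 'q \<Rightarrow> (nat \<Rightarrow> 'q) \<Rightarrow> nat \<Rightarrow> real" where
  "KL_div a s b x \<xi> n =
     (\<Sum>k=1..n. a s (\<xi> k) * ln (a s (\<xi> k) / b x (\<xi> k))
              + (1 - a s (\<xi> k)) * ln ((1 - a s (\<xi> k)) / (1 - b x (\<xi> k))))"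

definition argmin_set :: "('i \<Rightarrow> real) \<Rightarrow> 'i set \<Rightarrow> 'i set" where
  "argmin_set f I = {i \<in> I. \<forall>j \<in> I. f i \<le> f j}"

end

theory Submission
  imports Defs
begin

text \<open>Changing the reference distribution in the first slot of \<open>K\<close> from \<open>\<ell>\<close> to \<open>\<ell>\<^sup>^\<close> changes
  \<open>K(s,\<cdot> \<parallel> x,\<ell>\<^sup>^)\<close> by an entropy term independent of \<open>x\<close> plus
  \<open>\<Sum>\<^sub>k (\<ell>\<^sup>^ - \<ell>)(s,\<xi>\<^sub>k) logit \<ell>\<^sup>^(x,\<xi>\<^sub>k)\<close>. Since \<open>\<ell>\<^sup>^ \<ge> \<ell>\<close> and logit is increasing, this
  correction is largest at a candidate whose envelope dominates pointwise; so an envelope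
  minimiser \<open>i\<close> does at least as well as its dominating true minimiser \<open>j\<close>.\<close>

definition logit :: "real \<Rightarrow> real" where
  "logit t = ln t - ln (1 - t)"

definition binary_entropy :: "real \<Rightarrow> real" where
  "binary_entropy t = - (t * ln t + (1 - t) * ln (1 - t))"

lemma logit_mono:
  assumes "0 < a" "a \<le> b" "b < 1"
  shows "logit a \<le> logit b"
proof -
  have "ln a \<le> ln b" and "ln (1 - b) \<le> ln (1 - a)"
    using assms by simp_all
  then show ?thesis
    unfolding logit_def by linarith
qed

lemma KL_div_change_reference:
  assumes a: "\<And>k. k \<in> {1..n} \<Longrightarrow> 0 < a s (\<xi> k) \<and> a s (\<xi> k) < 1"
    and p: "\<And>k. k \<in> {1..n} \<Longrightarrow> 0 < p s (\<xi> k) \<and> p s (\<xi> k) < 1"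
    and b: "\<And>k. k \<in> {1..n} \<Longrightarrow> 0 < b x (\<xi> k) \<and> b x (\<xi> k) < 1"
  shows "KL_div a s b x \<xi> n = KL_div p s b x \<xi> n
      + (\<Sum>k=1..n. binary_entropy (p s (\<xi> k)) - binary_entropy (a s (\<xi> k)))
      + (\<Sum>k=1..n. (p s (\<xi> k) - a s (\<xi> k)) * logit (b x (\<xi> k)))"
proof -
  have pointwise: "\<alpha> * ln (\<alpha> / \<beta>) + (1 - \<alpha>) * ln ((1 - \<alpha>) / (1 - \<beta>)) =
      (\<pi> * ln (\<pi> / \<beta>) + (1 - \<pi>) * ln ((1 - \<pi>) / (1 - \<beta>)))
      + (binary_entropy \<pi> - binary_entropy \<alpha>) + (\<pi> - \<alpha>) * logit \<beta>"
    if "0 < \<alpha>" "\<alpha> < 1" "0 < \<beta>" "\<beta> < 1" "0 < \<pi>" "\<pi> < 1" for \<alpha> \<beta> \<pi> :: real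
    using that by (simp add: binary_entropy_def logit_def ln_div algebra_simps)
  show ?thesis
    unfolding KL_div_def sum.distrib[symmetric]
    by (rule sum.cong[OF refl], rule pointwise) (use a p b in auto)
qed

lemma argmin_set_perturb:
  assumes f: "\<And>m. m \<in> I \<Longrightarrow> f m = g m + h m"
    and i: "i \<in> argmin_set g I" and j: "j \<in> argmin_set f I"
    and h: "h i \<le> h j"
  shows "i \<in> argmin_set f I"
proof -
  have "i \<in> I" "j \<in> I" "g i \<le> g j"
    using i j by (auto simp: argmin_set_def)
  then have "f i \<le> f j"
    using f h by simp
  with j \<open>i \<in> I\<close> show ?thesis
    by (auto simp: argmin_set_def)
qed

theorem proposition4:
  fixes l lh :: "real^'q \<Rightarrow> real^'q \<Rightarrow> real"
    and s :: "real^'q" and c :: "nat \<Rightarrow> real^'q" and M n :: nat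
    and \<xi> :: "nat \<Rightarrow> real^'q"
  assumes l_range: "\<And>x y. 0 < l x y \<and> l x y < 1"
    and lh_range: "\<And>x y. 0 < lh x y \<and> lh x y < 1"
    and lh_cont: "continuous_on UNIV (\<lambda>(x, y). lh x y)"
    and env: "\<And>x y. lh x y \<ge> l x y"
    and periodic: "\<And>k. \<xi> (k + n) = \<xi> k"
    and dom: "\<forall>i \<in> {1..M}. \<exists>j \<in> argmin_set (\<lambda>i. KL_div l s lh (c i) \<xi> n) {1..M}.
                 \<forall>k \<in> {1..n}. lh (c j) (\<xi> k) \<ge> lh (c i) (\<xi> k)"
  shows "argmin_set (\<lambda>i. KL_div lh s lh (c i) \<xi> n) {1..M}
         \<subseteq> argmin_set (\<lambda>i. KL_div l s lh (c i) \<xi> n) {1..M}"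
proof
  fix i assume i: "i \<in> argmin_set (\<lambda>i. KL_div lh s lh (c i) \<xi> n) {1..M}"
  then have "i \<in> {1..M}"
    by (simp add: argmin_set_def)
  then obtain j where j: "j \<in> argmin_set (\<lambda>i. KL_div l s lh (c i) \<xi> n) {1..M}"
    and dominates: "\<forall>k \<in> {1..n}. lh (c i) (\<xi> k) \<le> lh (c j) (\<xi> k)"
    using dom by blast
  define h where "h m = (\<Sum>k=1..n. binary_entropy (lh s (\<xi> k)) - binary_entropy (l s (\<xi> k)))
      + (\<Sum>k=1..n. (lh s (\<xi> k) - l s (\<xi> k)) * logit (lh (c m) (\<xi> k)))" for m
  have "h i \<le> h j"
    unfolding h_def
    using env lh_range dominates
    by (intro add_left_mono sum_mono mult_left_mono logit_mono) auto
  moreover have "KL_div l s lh (c m) \<xi> n = KL_div lh s lh (c m) \<xi> n + h m" for m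
    unfolding h_def add.assoc[symmetric]
    by (rule KL_div_change_reference) (simp_all add: l_range lh_range)
  ultimately show "i \<in> argmin_set (\<lambda>i. KL_div l s lh (c i) \<xi> n) {1..M}"
    by (intro argmin_set_perturb[OF _ i j, where h = h])
qed

end
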